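(* Let $\pi$ be a group and $\rho\in\mathcal R(\pi,\widetilde{\mathrm{E}}_2)$. Let $s,t\in\pi$ be commuting elements generating a subgroup of $\pi$ isomorphic to $\mathbb Z\oplus\mathbb Z$. Then the rotational parts of $\rho(s)$ and $\rho(t)$ lie in $2\pi\mathbb Z$; equivalently their images in $\mathrm{E}_2$ are translations of $\mathbb R^2$ (and $\rho(s),\rho(t)$ act as translations of $\mathbb R^3$).
   Context: $\widetilde{\mathrm{E}}_2$ is $\mathbb R^3$ with coordinates $((x,y),\theta)$ and product $((x_0,y_0),\theta_0)\cdot((x,y),\theta)=(R_{\theta_0}(x,y)^T+(x_0,y_0)^T,\theta_0+\theta)$, $R_{\theta_0}$ the rotation matrix by angle $\theta_0$; $(x,y)$ is the translational part and $\theta$ the rotational part. It is the universal cover of $\mathrm{E}_2$, the group of orientation-preserving isometries of $\mathbb R^2$. $\mathcal R(\pi,\widetilde{\mathrm{E}}_2)$ is the set of faithful homomorphisms $\pi\to\widetilde{\mathrm{E}}_2$ with discrete cocompact image. *)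

theory Defs
  imports "HOL-Analysis.Analysis" "HOL-Algebra.Algebra"
begin

text \<open>The universal cover of E_2: points ((x,y),theta) of R^3 with the twisted product.\<close>

definition rot :: "real \<Rightarrow> real \<times> real \<Rightarrow> real \<times> real" where
  "rot th p = (cos th * fst p - sin th * snd p, sin th * fst p + cos th * snd p)"

definition E2t_mult :: "(real \<times> real) \<times> real \<Rightarrow> (real \<times> real) \<times> real \<Rightarrow> (real \<times> real) \<times> real" where
  "E2t_mult g h = (rot (snd g) (fst h) + fst g, snd g + snd h)"

definition E2t :: "((real \<times> real) \<times> real) monoid" where
  "E2t = \<lparr>carrier = UNIV, monoid.mult = E2t_mult, one = ((0,0),0)\<rparr>"

definition discrete_set :: "((real \<times> real) \<times> real) set \<Rightarrow> bool" where
  "discrete_set S \<longleftrightarrow> (\<forall>g\<in>S. \<exists>e>0. \<forall>h\<in>S. dist h g < e \<longrightarrow> h = g)"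

text \<open>A subgroup Gamma is cocompact if Gamma \ E2t is compact, i.e. E2t = Gamma K for some compact K.\<close>
definition cocompact :: "((real \<times> real) \<times> real) set \<Rightarrow> bool" where
  "cocompact S \<longleftrightarrow> (\<exists>K. compact K \<and> (\<forall>g. \<exists>\<gamma>\<in>S. \<exists>k\<in>K. g = E2t_mult \<gamma> k))"

definition Rep_E2t :: "('a, 'b) monoid_scheme \<Rightarrow> ('a \<Rightarrow> (real \<times> real) \<times> real) set" where
  "Rep_E2t G = {\<rho>. \<rho> \<in> hom G E2t \<and> inj_on \<rho> (carrier G)
     \<and> discrete_set (\<rho> ` carrier G) \<and> cocompact (\<rho> ` carrier G)}"

end

theory Submission
  imports Defs "HOL-Analysis.Kronecker_Approximation_Theorem"
begin

(* Suppose the rotational part a of rho(s) is not in 2 pi Z. Then rho(s) is the rotation by a about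
   some point c of the plane, and everything commuting with it, in particular rho(t), is a rotation
   about the same point, say by b. Hence rho(s^p t^q) is the rotation about c by p a + q b. By
   Dirichlet's approximation theorem some p a + q b with (p, q) <> (0, 0) is arbitrarily small, so by
   discreteness rho(s^p t^q) = 1 and by faithfulness s^p t^q = 1. This is impossible, because s and t
   generate a copy of Z^2 and are therefore independent. *)

lemma rot_zero [simp]: "rot 0 p = p"
  by (simp add: rot_def)

lemma rot_rot [simp]: "rot a (rot b p) = rot (a + b) p"
  by (simp add: rot_def cos_add sin_add algebra_simps)

lemma rot_zero_vector [simp]: "rot a 0 = 0"
  by (simp add: rot_def zero_prod_def)

lemma rot_add: "rot a (p + q) = rot a p + rot a q"
  and rot_diff: "rot a (p - q) = rot a p - rot a q"
  and rot_scaleR: "rot a (r *\<^sub>R p) = r *\<^sub>R rot a p"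
  by (simp_all add: rot_def algebra_simps)

lemma rot_add_rot_uminus: "rot a p + rot (- a) p = (2 * cos a) *\<^sub>R p"
  by (simp add: rot_def prod_eq_iff)

(* Inverts I - R_a up to the factor 2 - 2 cos a, which vanishes only when cos a = 1. *)
lemma rot_double_displacement:
  "(p - rot a p) - rot (- a) (p - rot a p) = (2 - 2 * cos a) *\<^sub>R p"
proof -
  have "(p - rot a p) - rot (- a) (p - rot a p) = 2 *\<^sub>R p - (rot a p + rot (- a) p)"
    by (simp add: rot_diff scaleR_2 algebra_simps)
  also have "\<dots> = (2 - 2 * cos a) *\<^sub>R p"
    by (simp add: rot_add_rot_uminus scaleR_diff_left)
  finally show ?thesis .
qed

lemma rot_fixed_point_eq_zero:
  assumes "cos a \<noteq> 1" "rot a p = p" shows "p = 0"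
  using rot_double_displacement[of p a] assms by simp

lemma rot_displacement_surj:
  assumes "cos a \<noteq> 1" obtains c where "c - rot a c = v"
proof
  define k where "k = 2 - 2 * cos a"
  let ?c = "(1 / k) *\<^sub>R (v - rot (- a) v)"
  have "?c - rot a ?c = (1 / k) *\<^sub>R ((v - rot (- a) v) - rot a (v - rot (- a) v))"
    by (simp only: rot_scaleR flip: scaleR_diff_right)
  also have "\<dots> = v"
    using rot_double_displacement[of v "- a"] assms by (simp add: k_def)
  finally show "?c - rot a ?c = v" .
qed

lemma carrier_E2t [simp]: "carrier E2t = UNIV"
  and mult_E2t [simp]: "g \<otimes>\<^bsub>E2t\<^esub> h = E2t_mult g h"
  and one_E2t [simp]: "\<one>\<^bsub>E2t\<^esub> = ((0, 0), 0)"
  by (simp_all add: E2t_def)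

lemma group_E2t: "group E2t"
proof (rule groupI)
  fix g h k :: "(real \<times> real) \<times> real"
  show "g \<otimes>\<^bsub>E2t\<^esub> h \<otimes>\<^bsub>E2t\<^esub> k = g \<otimes>\<^bsub>E2t\<^esub> (h \<otimes>\<^bsub>E2t\<^esub> k)"
    by (simp add: E2t_mult_def rot_add algebra_simps)
  have "E2t_mult (- rot (- snd g) (fst g), - snd g) g = ((0, 0), 0)"
    by (simp add: E2t_mult_def zero_prod_def)
  then show "\<exists>h\<in>carrier E2t. h \<otimes>\<^bsub>E2t\<^esub> g = \<one>\<^bsub>E2t\<^esub>"
    unfolding carrier_E2t mult_E2t one_E2t by blast
qed (simp_all add: E2t_mult_def flip: zero_prod_def)

(* Lift of the rotation x \<mapsto> c + rot a (x - c) about the point c. *)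
definition E2t_rotation :: "real \<times> real \<Rightarrow> real \<Rightarrow> (real \<times> real) \<times> real" where
  "E2t_rotation c a = (c - rot a c, a)"

lemma E2t_rotation_zero [simp]: "E2t_rotation c 0 = ((0, 0), 0)"
  by (simp add: E2t_rotation_def zero_prod_def)

lemma E2t_mult_rotation [simp]:
  "E2t_mult (E2t_rotation c a) (E2t_rotation c b) = E2t_rotation c (a + b)"
  by (simp add: E2t_rotation_def E2t_mult_def rot_diff add.commute)

lemma E2t_rotation_nat_pow:
  "E2t_rotation c a [^]\<^bsub>E2t\<^esub> (n :: nat) = E2t_rotation c (real n * a)"
  by (induction n) (simp_all add: distrib_right add.commute)

lemma E2t_rotation_inv: "inv\<^bsub>E2t\<^esub> (E2t_rotation c a) = E2t_rotation c (- a)"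
  by (rule group.inv_equality[OF group_E2t]) simp_all

lemma E2t_rotation_int_pow:
  "E2t_rotation c a [^]\<^bsub>E2t\<^esub> (n :: int) = E2t_rotation c (of_int n * a)"
  by (simp add: int_pow_def2 E2t_rotation_nat_pow E2t_rotation_inv)

lemma continuous_E2t_rotation: "continuous (at x) (E2t_rotation c)"
  unfolding E2t_rotation_def rot_def by (intro continuous_intros)

lemma E2t_rotation_exists:
  assumes "cos (snd g) \<noteq> 1" obtains c where "g = E2t_rotation c (snd g)"
  using rot_displacement_surj[OF assms, of "fst g"] by (metis E2t_rotation_def prod.collapse)

lemma E2t_commute_rotation:
  assumes "cos a \<noteq> 1" "E2t_mult (E2t_rotation c a) h = E2t_mult h (E2t_rotation c a)"
  shows "h = E2t_rotation c (snd h)"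
proof -
  obtain b b' where h: "h = (b, b')" by (cases h)
  define d where "d = b - (c - rot b' c)"
  have "rot a b + (c - rot a c) = rot b' (c - rot a c) + b"
    using assms(2) by (simp add: h E2t_rotation_def E2t_mult_def)
  then have "rot a d = d"
    by (simp add: d_def rot_add rot_diff add.commute algebra_simps)
  then have "d = 0" using rot_fixed_point_eq_zero[OF assms(1)] by blast
  then show ?thesis by (simp add: h d_def E2t_rotation_def)
qed

lemma small_int_combination:
  fixes a b d :: real
  assumes "d > 0"
  obtains p q :: int where "p \<noteq> 0 \<or> q \<noteq> 0" "\<bar>p * a + q * b\<bar> < d"
proof (cases "b = 0")
  case True
  then show ?thesis using assms by (intro that[of 0 1]) auto
next
  case False
  obtain N :: nat where N: "N > \<bar>b\<bar> / d" using reals_Archimedean2 by blast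
  moreover have "\<bar>b\<bar> / d \<ge> 0" using assms by simp
  ultimately have "N > 0" by linarith
  then obtain q p where q: "0 < q" and pq: "\<bar>of_int q * (a / b) - of_int (p 0)\<bar> < 1 / N"
    by (rule Dirichlet_approx_simult[where \<theta> = "\<lambda>_. a / b" and n = 1]) auto
  have "\<bar>q * a + (- p 0) * b\<bar> = \<bar>b\<bar> * \<bar>of_int q * (a / b) - of_int (p 0)\<bar>"
    using False by (simp add: abs_mult[symmetric] field_simps)
  also have "\<dots> \<le> \<bar>b\<bar> / N" using pq by (simp add: mult_left_mono divide_inverse)
  also have "\<dots> < d" using N \<open>N > 0\<close> assms by (simp add: field_simps)
  finally show ?thesis using q by (intro that[of q "- p 0"]) auto
qed

lemma discrete_set_rotation_relation:
  fixes a b :: real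
  assumes "discrete_set S" "((0, 0), 0) \<in> S"
    and "\<And>p q. E2t_rotation c (of_int p * a + of_int q * b) \<in> S"
  obtains p q :: int
  where "p \<noteq> 0 \<or> q \<noteq> 0" "E2t_rotation c (of_int p * a + of_int q * b) = ((0, 0), 0)"
proof -
  obtain e where "e > 0" and e: "\<And>g. g \<in> S \<Longrightarrow> dist g ((0, 0), 0) < e \<Longrightarrow> g = ((0, 0), 0)"
    using assms(1,2) unfolding discrete_set_def by blast
  obtain d where "d > 0" and d: "\<And>x. dist x 0 < d \<Longrightarrow> dist (E2t_rotation c x) ((0, 0), 0) < e"
    using continuous_E2t_rotation[of 0 c] \<open>e > 0\<close> unfolding continuous_at_eps_delta
    by (metis E2t_rotation_zero)
  obtain p q :: int where "p \<noteq> 0 \<or> q \<noteq> 0" "\<bar>p * a + q * b\<bar> < d"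
    using small_int_combination[OF \<open>d > 0\<close>] by blast
  then show thesis using that d e assms(3) by (simp add: dist_real_def)
qed

lemma int_pow_integer_group_pair:
  "w [^]\<^bsub>integer_group \<times>\<times> integer_group\<^esub> (n :: int) = (n * fst w, n * snd w)"
proof -
  let ?Z2 = "integer_group \<times>\<times> integer_group"
  have grp: "group ?Z2" by (simp add: DirProd_group)
  have "fst \<in> hom ?Z2 integer_group" "snd \<in> hom ?Z2 integer_group"
    by (auto intro!: homI simp: mult_DirProd')
  then show ?thesis
    using hom_int_pow[OF _ _ grp group_integer_group, of _ w n] by (simp add: prod_eq_iff)
qed

lemma integer_group_pair_generators_det_nonzero:
  fixes u v :: "int \<times> int"
  assumes gen: "generate (integer_group \<times>\<times> integer_group) {u, v} = UNIV"
  shows "fst u * snd v - snd u * fst v \<noteq> 0"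
proof -
  let ?Z2 = "integer_group \<times>\<times> integer_group"
  interpret Z2: group ?Z2 by (simp add: DirProd_group)
  define comb where "comb m n = (m * fst u + n * fst v, m * snd u + n * snd v)" for m n :: int
  define span where "span = {comb m n | m n. True}"
  have "subgroup span ?Z2"
  proof (rule Z2.subgroupI)
    show "inv\<^bsub>?Z2\<^esub> w \<in> span" if "w \<in> span" for w
    proof -
      from that obtain m n where "w = comb m n" unfolding span_def by blast
      then have "inv\<^bsub>?Z2\<^esub> w = comb (- m) (- n)" by (simp add: comb_def)
      then show ?thesis unfolding span_def by blast
    qed
    show "w \<otimes>\<^bsub>?Z2\<^esub> w' \<in> span" if "w \<in> span" "w' \<in> span" for w w'
    proof -
      from that obtain m n m' n' where "w = comb m n" "w' = comb m' n'" unfolding span_def by blast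
      then have "w \<otimes>\<^bsub>?Z2\<^esub> w' = comb (m + m') (n + n')" by (simp add: comb_def algebra_simps)
      then show ?thesis unfolding span_def by blast
    qed
    show "span \<noteq> {}" unfolding span_def by blast
  qed simp
  moreover have "u = comb 1 0" "v = comb 0 1" by (simp_all add: comb_def)
  ultimately have "generate ?Z2 {u, v} \<subseteq> span"
    by (intro Z2.generate_subgroup_incl) (auto simp: span_def)
  then have "(1, 0) \<in> span" "(0, 1) \<in> span" using gen by auto
  then obtain m n m' n' where mn: "(1, 0) = comb m n" "(0, 1) = comb m' n'"
    unfolding span_def by blast
  have "(m * n' - n * m') * (fst u * snd v - snd u * fst v) =
      (m * fst u + n * fst v) * (m' * snd u + n' * snd v)
      - (m * snd u + n * snd v) * (m' * fst u + n' * fst v)"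
    by (simp add: algebra_simps)
  also have "\<dots> = 1"
    using mn by (simp add: comb_def)
  finally show ?thesis by (metis mult_zero_right zero_neq_one)
qed

lemma integer_group_pair_generators_independent:
  fixes u v :: "int \<times> int" and p q :: int
  assumes gen: "generate (integer_group \<times>\<times> integer_group) {u, v} = UNIV"
    and rel: "u [^]\<^bsub>integer_group \<times>\<times> integer_group\<^esub> p \<otimes>\<^bsub>integer_group \<times>\<times> integer_group\<^esub>
              v [^]\<^bsub>integer_group \<times>\<times> integer_group\<^esub> q = \<one>\<^bsub>integer_group \<times>\<times> integer_group\<^esub>"
  shows "p = 0 \<and> q = 0"
proof -
  have rel_fst: "p * fst u + q * fst v = 0" and rel_snd: "p * snd u + q * snd v = 0"
    using rel by (simp_all add: int_pow_integer_group_pair mult_DirProd')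
  have "p * (fst u * snd v - snd u * fst v)
      = snd v * (p * fst u + q * fst v) - fst v * (p * snd u + q * snd v)"
    and "q * (fst u * snd v - snd u * fst v)
      = fst u * (p * snd u + q * snd v) - snd u * (p * fst u + q * fst v)"
    by (simp_all add: algebra_simps)
  then have "p * (fst u * snd v - snd u * fst v) = 0" "q * (fst u * snd v - snd u * fst v) = 0"
    by (simp_all only: rel_fst rel_snd mult_zero_right diff_self)
  then show ?thesis using integer_group_pair_generators_det_nonzero[OF gen] by simp
qed

lemma iso_integer_group_pair_generators_independent:
  fixes G (structure) and p q :: int
  assumes "group G" "s \<in> carrier G" "t \<in> carrier G"
    and iso: "G\<lparr>carrier := generate G {s, t}\<rparr> \<cong> integer_group \<times>\<times> integer_group"
    and rel: "s [^] p \<otimes> t [^] q = \<one>"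
  shows "p = 0 \<and> q = 0"
proof -
  interpret group G by fact
  let ?K = "generate G {s, t}"
  let ?Z2 = "integer_group \<times>\<times> integer_group"
  have st: "{s, t} \<subseteq> ?K" by (auto intro: generate.incl)
  have K: "subgroup ?K G" using assms(2,3) by (intro generate_is_subgroup) auto
  obtain f where f: "f \<in> iso (G\<lparr>carrier := ?K\<rparr>) ?Z2" using iso unfolding is_iso_def by blast
  interpret K: group "G\<lparr>carrier := ?K\<rparr>" by (rule subgroup_imp_group[OF K])
  interpret f: group_hom "G\<lparr>carrier := ?K\<rparr>" ?Z2 f
    using f by (simp add: group_hom_def group_hom_axioms_def iso_imp_homomorphism DirProd_group
        K.group_axioms)
  have "generate ?Z2 {f s, f t} = f ` generate (G\<lparr>carrier := ?K\<rparr>) {s, t}"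
    using f.generate_img[of "{s, t}"] st by simp
  also have "\<dots> = f ` ?K" by (simp only: generate_consistent[OF st K])
  also have "\<dots> = UNIV" using f by (simp add: iso_def bij_betw_def)
  finally have gen: "generate ?Z2 {f s, f t} = UNIV" .
  have "f s [^]\<^bsub>?Z2\<^esub> p \<otimes>\<^bsub>?Z2\<^esub> f t [^]\<^bsub>?Z2\<^esub> q = f (s [^] p \<otimes> t [^] q)"
    using st K.int_pow_closed f.hom_mult[of "s [^] p" "t [^] q"]
      f.hom_int_pow[of s p] f.hom_int_pow[of t q]
    by (simp add: int_pow_consistent[OF K])
  also have "\<dots> = \<one>\<^bsub>?Z2\<^esub>" using rel f.hom_one by simp
  finally show ?thesis using gen by (rule integer_group_pair_generators_independent[rotated])
qed

lemma Rep_E2t_rotational_part_in_2pi_Ints: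
  fixes G (structure)
  assumes "group G" "\<rho> \<in> Rep_E2t G" "s \<in> carrier G" "t \<in> carrier G" "s \<otimes> t = t \<otimes> s"
    and iso: "G\<lparr>carrier := generate G {s, t}\<rparr> \<cong> integer_group \<times>\<times> integer_group"
  shows "\<exists>k::int. snd (\<rho> s) = 2 * pi * of_int k"
proof (rule ccontr)
  assume not_2pi_Ints: "\<nexists>k::int. snd (\<rho> s) = 2 * pi * of_int k"
  interpret group G by fact
  interpret \<rho>: group_hom G E2t \<rho>
    using assms(2) group_E2t by (simp add: Rep_E2t_def group_hom_def group_hom_axioms_def group_axioms)
  define a b where "a = snd (\<rho> s)" and "b = snd (\<rho> t)"
  have "cos a \<noteq> 1"
    using not_2pi_Ints by (auto simp: a_def cos_one_2pi_int mult.commute mult.left_commute)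
  then obtain c where \<rho>s: "\<rho> s = E2t_rotation c a" unfolding a_def by (rule E2t_rotation_exists)
  have "E2t_mult (\<rho> s) (\<rho> t) = E2t_mult (\<rho> t) (\<rho> s)"
    using assms(3-5) \<rho>.hom_mult[of s t] \<rho>.hom_mult[of t s] by simp
  then have \<rho>t: "\<rho> t = E2t_rotation c b"
    using E2t_commute_rotation[OF \<open>cos a \<noteq> 1\<close>] by (simp add: \<rho>s b_def)
  have \<rho>_relation: "\<rho> (s [^] p \<otimes> t [^] q) = E2t_rotation c (of_int p * a + of_int q * b)"
    for p q :: int
    using assms(3,4) by (simp add: \<rho>.hom_int_pow \<rho>s \<rho>t E2t_rotation_int_pow)
  have "discrete_set (\<rho> ` carrier G)" using assms(2) by (simp add: Rep_E2t_def)
  moreover have "((0, 0), 0) \<in> \<rho> ` carrier G" using \<rho>.hom_one by force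
  moreover have "E2t_rotation c (of_int p * a + of_int q * b) \<in> \<rho> ` carrier G" for p q :: int
    using assms(3,4) \<rho>_relation[of p q] by (metis image_eqI m_closed int_pow_closed)
  ultimately obtain p q :: int
    where "p \<noteq> 0 \<or> q \<noteq> 0" "E2t_rotation c (of_int p * a + of_int q * b) = ((0, 0), 0)"
    by (rule discrete_set_rotation_relation)
  then have "\<rho> (s [^] p \<otimes> t [^] q) = \<rho> \<one>"
    using \<rho>_relation[of p q] \<rho>.hom_one by simp
  moreover have "inj_on \<rho> (carrier G)" using assms(2) by (simp add: Rep_E2t_def)
  moreover have "s [^] p \<otimes> t [^] q \<in> carrier G" using assms(3,4) by simp
  ultimately have "s [^] p \<otimes> t [^] q = \<one>"
    by (metis inj_onD one_closed)
  then show False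
    using iso_integer_group_pair_generators_independent[OF assms(1,3,4) iso] \<open>p \<noteq> 0 \<or> q \<noteq> 0\<close>
    by blast
qed

theorem lemma5:
  fixes G :: "('a, 'b) monoid_scheme" and \<rho> :: "'a \<Rightarrow> (real \<times> real) \<times> real" and s t :: 'a
  assumes "group G"
    and "\<rho> \<in> Rep_E2t G"
    and "s \<in> carrier G" and "t \<in> carrier G"
    and "s \<otimes>\<^bsub>G\<^esub> t = t \<otimes>\<^bsub>G\<^esub> s"
    and "G\<lparr>carrier := generate G {s, t}\<rparr> \<cong> integer_group \<times>\<times> integer_group"
  shows "(\<exists>k::int. snd (\<rho> s) = 2 * pi * of_int k) \<and> (\<exists>k::int. snd (\<rho> t) = 2 * pi * of_int k)"
proof
  show "\<exists>k::int. snd (\<rho> s) = 2 * pi * of_int k"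
    by (rule Rep_E2t_rotational_part_in_2pi_Ints[OF assms])
  have "G\<lparr>carrier := generate G {t, s}\<rparr> \<cong> integer_group \<times>\<times> integer_group"
    using assms(6) by (simp add: insert_commute)
  then show "\<exists>k::int. snd (\<rho> t) = 2 * pi * of_int k"
    by (rule Rep_E2t_rotational_part_in_2pi_Ints[OF assms(1,2,4,3) assms(5)[symmetric]])
qed

end
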